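(* Let $\Omega$ be a nonempty set and $\succeq$ a regular stochastic order on $\mathfrak F(\Omega)$. Then $\succeq$ is induced by an ideal of subsets of $\Omega$ if and only if there exists a weak$^*$ compact set $\mathbb P_\succeq\subset\mathbb P$ such that $\sup\{\mu(A):\mu\in\mathbb P_\succeq\}\in\{0,1\}$ for all $A\subset\Omega$ and, for all $f,g\in\mathfrak F(\Omega)$, $$f\succeq g\quad\text{if and only if}\quad\inf_{\mu\in\mathbb P_\succeq}\int(f-g)\,d\mu\ge0 .$$
   Context: $\mathfrak F(\Omega)$ is the set of real-valued functions on $\Omega$; inequalities between functions are pointwise and constants are identified with constant functions. A regular stochastic order is a reflexive, transitive binary relation $\succeq$ on $\mathfrak F(\Omega)$ such that: (TRIV) $0\not\succeq 1$; (CONE) $f_i\succeq g_i$ and $a_i\ge0$ for $i=1,2$ imply $a_1f_1+a_2f_2\succeq a_1g_1+a_2g_2$; (CERT) $f\ge0$ implies $f\succeq0$; (APPR) if $f+2^{-n}\succeq0$ for all $n\in\mathbb N$ then $f\succeq0$; (REST) $f\succeq0$ and $A\subset\Omega$ imply $f1_A\succeq0$. The order $\succeq$ is induced by an ideal if there is a family $\mathcal N$ of subsets of $\Omega$, closed under finite unions and under taking subsets, with $\Omega\notin\mathcal N$, such that $f\succeq g$ iff $\{f-g\le-\eta\}\in\mathcal N$ for every $\eta>0$. $ba$ denotes the bounded finitely additive real set functions on all subsets of $\Omega$, $\mathbb P$ the finitely additive probabilities in $ba$; the weak$^*$ topology on $ba$ is the one induced by duality with bounded functions, $\langle m,f\rangle=\int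 f\,dm$. For $\mu\in ba$ and $f\in\mathfrak F(\Omega)$, $\int f\,d\mu:=\lim_n\int[(f^+\wedge n)-(f^-\wedge n)]\,d\mu$ if this limit exists in $[-\infty,\infty]$, and $\int f\,d\mu:=\infty$ otherwise. *)

theory Defs
  imports "HOL-Analysis.Analysis"
begin

text \<open>Functions on the ground set Omega are modelled as functions on the type 'a
  (all types are nonempty).  A binary relation on such functions is a predicate R,
  where R f g means f is above g in the order.\<close>

definition regular_stochastic_order :: "(('a \<Rightarrow> real) \<Rightarrow> ('a \<Rightarrow> real) \<Rightarrow> bool) \<Rightarrow> bool" where
  "regular_stochastic_order R \<longleftrightarrow>
     (\<forall>f. R f f) \<and>
     (\<forall>f g h. R f g \<longrightarrow> R g h \<longrightarrow> R f h) \<and>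
     \<not> R (\<lambda>_. 0) (\<lambda>_. 1) \<and>
     (\<forall>f1 g1 f2 g2 (a1::real) (a2::real). R f1 g1 \<longrightarrow> R f2 g2 \<longrightarrow> a1 \<ge> 0 \<longrightarrow> a2 \<ge> 0 \<longrightarrow>
        R (\<lambda>x. a1 * f1 x + a2 * f2 x) (\<lambda>x. a1 * g1 x + a2 * g2 x)) \<and>
     (\<forall>f. (\<forall>x. f x \<ge> 0) \<longrightarrow> R f (\<lambda>_. 0)) \<and>
     (\<forall>f. (\<forall>n::nat. R (\<lambda>x. f x + 2 powi (- int n)) (\<lambda>_. 0)) \<longrightarrow> R f (\<lambda>_. 0)) \<and>
     (\<forall>f A. R f (\<lambda>_. 0) \<longrightarrow> R (\<lambda>x. f x * indicator A x) (\<lambda>_. 0))"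

definition induced_by_ideal :: "(('a \<Rightarrow> real) \<Rightarrow> ('a \<Rightarrow> real) \<Rightarrow> bool) \<Rightarrow> bool" where
  "induced_by_ideal R \<longleftrightarrow>
     (\<exists>N :: 'a set set.
        {} \<in> N \<and>
        (\<forall>A B. A \<in> N \<longrightarrow> B \<in> N \<longrightarrow> A \<union> B \<in> N) \<and>
        (\<forall>A B. A \<in> N \<longrightarrow> B \<subseteq> A \<longrightarrow> B \<in> N) \<and>
        UNIV \<notin> N \<and>
        (\<forall>f g. R f g \<longleftrightarrow> (\<forall>\<eta>>0. {x. f x - g x \<le> - \<eta>} \<in> N)))"

definition ba :: "('a set \<Rightarrow> real) set" where
  "ba = {\<mu>. (\<forall>A B. A \<inter> B = {} \<longrightarrow> \<mu> (A \<union> B) = \<mu> A + \<mu> B) \<and> (\<exists>C. \<forall>A. \<bar>\<mu> A\<bar> \<le> C)}"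

definition fa_probs :: "('a set \<Rightarrow> real) set" where
  "fa_probs = {\<mu> \<in> ba. (\<forall>A. \<mu> A \<ge> 0) \<and> \<mu> UNIV = 1}"

definition bounded_fun :: "('a \<Rightarrow> real) \<Rightarrow> bool" where
  "bounded_fun f \<longleftrightarrow> (\<exists>C. \<forall>x. \<bar>f x\<bar> \<le> C)"

definition simple_int :: "('a set \<Rightarrow> real) \<Rightarrow> ('a \<Rightarrow> real) \<Rightarrow> real" where
  "simple_int \<mu> s = (\<Sum>y\<in>range s. y * \<mu> (s -` {y}))"

text \<open>Dyadic lower approximation; finitely valued for bounded f and uniformly convergent.\<close>
definition dyadic :: "nat \<Rightarrow> ('a \<Rightarrow> real) \<Rightarrow> 'a \<Rightarrow> real" where
  "dyadic n f = (\<lambda>x. real_of_int \<lfloor>2 ^ n * f x\<rfloor> / 2 ^ n)"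

text \<open>The (Dunford--Schwartz) integral of a bounded function w.r.t. m in ba,
  as the limit of integrals of uniformly approximating simple functions.\<close>
definition ba_int :: "('a set \<Rightarrow> real) \<Rightarrow> ('a \<Rightarrow> real) \<Rightarrow> real" where
  "ba_int \<mu> f = lim (\<lambda>n. simple_int \<mu> (dyadic n f))"

definition trunc_fun :: "nat \<Rightarrow> ('a \<Rightarrow> real) \<Rightarrow> 'a \<Rightarrow> real" where
  "trunc_fun n f = (\<lambda>x. min (max (f x) 0) (real n) - min (max (- f x) 0) (real n))"

definition gen_int :: "('a set \<Rightarrow> real) \<Rightarrow> ('a \<Rightarrow> real) \<Rightarrow> ereal" where
  "gen_int \<mu> f =
     (if (\<exists>L::ereal. (\<lambda>n. ereal (ba_int \<mu> (trunc_fun n f))) \<longlonglongrightarrow> L)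
      then lim (\<lambda>n. ereal (ba_int \<mu> (trunc_fun n f))) else \<infinity>)"

definition weak_star :: "('a set \<Rightarrow> real) topology" where
  "weak_star = topology_generated_by
     {{m \<in> ba. ba_int m f \<in> U} | f U. bounded_fun f \<and> open U}"

end

(* If the order is induced by a proper ideal N, take for P the {0,1}-valued finitely additive
   probabilities vanishing on N.  By Zorn's lemma every set outside N is charged by one of them:
   a maximal ideal avoiding the set contains B or -B for every B, and then "not in the ideal" is
   an additive {0,1}-valued set function.  Since the extended integral of h is nonnegative as
   soon as every {h <= -eta} is null, and negative if h <= 0 a.e. and some {h <= -eta} is
   charged, this P represents the order.  It is closed in the cube [0,1]^(2^Omega), hence
   compact for the product topology, which is finer on P than the weak* topology because
   integrals of bounded functions are uniform limits of finite combinations of coordinates.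
   Conversely, for a representing P the sets null for every member of P form an ideal, and
   restriction (REST) shows that it induces the order: if f >= g, then (f - g) 1_A >= 0 for
   A = {f - g <= -eta}, and the integral of (f - g) 1_A is negative under any mu charging A. *)

theory Submission
  imports Defs
begin

section \<open>Finitely additive probabilities and integrals of simple functions\<close>

lemma fa_probsD:
  assumes "\<mu> \<in> fa_probs"
  shows fa_probs_additive: "A \<inter> B = {} \<Longrightarrow> \<mu> (A \<union> B) = \<mu> A + \<mu> B"
    and fa_probs_nonneg: "\<mu> A \<ge> 0"
    and fa_probs_UNIV: "\<mu> UNIV = 1"
  using assms unfolding fa_probs_def ba_def by auto

lemma fa_probs_empty: "\<mu> \<in> fa_probs \<Longrightarrow> \<mu> {} = 0"
  using fa_probs_additive[of \<mu> "{}" "{}"] by simp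

lemma fa_probs_mono:
  assumes "\<mu> \<in> fa_probs" "A \<subseteq> B"
  shows "\<mu> A \<le> \<mu> B"
proof -
  have "\<mu> B = \<mu> A + \<mu> (B - A)"
    using fa_probs_additive[OF assms(1), of A "B - A"] assms(2) by (simp add: Un_absorb1)
  then show ?thesis
    using fa_probs_nonneg[OF assms(1), of "B - A"] by simp
qed

lemma fa_probs_subadditive:
  assumes "\<mu> \<in> fa_probs"
  shows "\<mu> (A \<union> B) \<le> \<mu> A + \<mu> B"
  using fa_probs_additive[OF assms, of A "B - A"] fa_probs_mono[OF assms, of "B - A" B] by auto

lemma fa_probs_Compl:
  assumes "\<mu> \<in> fa_probs"
  shows "\<mu> (- A) = 1 - \<mu> A"
  using fa_probs_additive[OF assms, of A "- A"] fa_probs_UNIV[OF assms] by simp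

lemma fa_probs_le_1: "\<mu> \<in> fa_probs \<Longrightarrow> \<mu> A \<le> 1"
  using fa_probs_mono[of \<mu> A UNIV] fa_probs_UNIV[of \<mu>] by simp

lemma fa_probs_null_if_disjoint_full:
  assumes "\<mu> \<in> fa_probs" "\<mu> A = 1" "A \<inter> B = {}"
  shows "\<mu> B = 0"
  using fa_probs_mono[OF assms(1), of B "- A"] fa_probs_Compl[OF assms(1), of A]
    fa_probs_nonneg[OF assms(1), of B] assms(2,3) by auto

lemma fa_probs_vimage_sum:
  assumes "\<mu> \<in> fa_probs" "finite Y"
  shows "\<mu> (s -` Y) = (\<Sum>y\<in>Y. \<mu> (s -` {y}))"
  using assms(2)
proof (induction Y rule: finite_induct)
  case empty
  then show ?case using fa_probs_empty[OF assms(1)] by simp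
next
  case (insert y Y)
  have "s -` insert y Y = s -` {y} \<union> s -` Y" "s -` {y} \<inter> s -` Y = {}"
    using insert.hyps by auto
  then show ?case using insert fa_probs_additive[OF assms(1)] by simp
qed

lemma simple_int_superset:
  assumes "\<mu> \<in> fa_probs" "finite Y" "range s \<subseteq> Y"
  shows "simple_int \<mu> s = (\<Sum>y\<in>Y. y * \<mu> (s -` {y}))"
  unfolding simple_int_def
proof (rule sum.mono_neutral_left[OF assms(2,3)], intro ballI)
  fix y assume "y \<in> Y - range s"
  then have "s -` {y} = {}" by auto
  then show "y * \<mu> (s -` {y}) = 0" using fa_probs_empty[OF assms(1)] by simp
qed

lemma simple_int_comp:
  assumes \<mu>: "\<mu> \<in> fa_probs" and Y: "finite Y" "range s \<subseteq> Y"
  shows "simple_int \<mu> (\<lambda>x. \<phi> (s x)) = (\<Sum>y\<in>Y. \<phi> y * \<mu> (s -` {y}))"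
proof -
  let ?fibre = "\<lambda>z. {y\<in>Y. \<phi> y = z}"
  have "(\<Sum>y\<in>Y. \<phi> y * \<mu> (s -` {y})) = (\<Sum>z\<in>\<phi> ` Y. \<Sum>y\<in>?fibre z. \<phi> y * \<mu> (s -` {y}))"
    by (rule sum.image_gen[OF Y(1)])
  also have "\<dots> = (\<Sum>z\<in>\<phi> ` Y. z * (\<Sum>y\<in>?fibre z. \<mu> (s -` {y})))"
    by (simp add: sum_distrib_left)
  also have "\<dots> = (\<Sum>z\<in>\<phi> ` Y. z * \<mu> (s -` ?fibre z))"
    using fa_probs_vimage_sum[OF \<mu>, of "?fibre _" s] Y(1) by simp
  also have "\<dots> = (\<Sum>z\<in>\<phi> ` Y. z * \<mu> ((\<lambda>x. \<phi> (s x)) -` {z}))"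
    using Y(2) by (intro sum.cong refl arg_cong[where f = "\<lambda>A. _ * \<mu> A"]) auto
  also have "\<dots> = simple_int \<mu> (\<lambda>x. \<phi> (s x))"
  proof -
    have "range (\<lambda>x. \<phi> (s x)) \<subseteq> \<phi> ` Y" using Y(2) by auto
    then show ?thesis using simple_int_superset[OF \<mu> finite_imageI[OF Y(1)]] by simp
  qed
  finally show ?thesis ..
qed

text \<open>Two simple functions are compared through their joint distribution, i.e. on the
  finitely many cells where both are constant.\<close>

lemma simple_int_mono_AE:
  assumes \<mu>: "\<mu> \<in> fa_probs" and s: "finite (range s)" and t: "finite (range t)"
    and A: "\<mu> A = 1" and le: "\<And>x. x \<in> A \<Longrightarrow> s x \<le> t x"
  shows "simple_int \<mu> s \<le> simple_int \<mu> t"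
proof -
  let ?st = "\<lambda>x. (s x, t x)"
  have joint: "simple_int \<mu> (\<lambda>x. \<phi> (?st x)) = (\<Sum>q\<in>range s \<times> range t. \<phi> q * \<mu> (?st -` {q}))"
    for \<phi> :: "real \<times> real \<Rightarrow> real"
    using simple_int_comp[OF \<mu>, of "range s \<times> range t" ?st \<phi>] s t by auto
  have cell: "fst q * \<mu> (?st -` {q}) \<le> snd q * \<mu> (?st -` {q})" for q
  proof (cases "fst q \<le> snd q")
    case True
    then show ?thesis using fa_probs_nonneg[OF \<mu>] by (simp add: mult_right_mono)
  next
    case False
    then have "A \<inter> ?st -` {q} = {}" using le by force
    then show ?thesis using fa_probs_null_if_disjoint_full[OF \<mu> A] by simp
  qed
  show ?thesis
    using joint[of fst] joint[of snd] sum_mono[OF cell] by simp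
qed

lemma simple_int_const: "\<mu> \<in> fa_probs \<Longrightarrow> simple_int \<mu> (\<lambda>_. c) = c"
  using simple_int_superset[of \<mu> "{c}" "\<lambda>_. c"] fa_probs_UNIV[of \<mu>] by simp

lemma simple_int_add_const:
  assumes \<mu>: "\<mu> \<in> fa_probs" and s: "finite (range s)"
  shows "simple_int \<mu> (\<lambda>x. s x + c) = simple_int \<mu> s + c"
proof -
  have "simple_int \<mu> (\<lambda>x. s x + c) = (\<Sum>y\<in>range s. (y + c) * \<mu> (s -` {y}))"
    using simple_int_comp[OF \<mu> s, of s "\<lambda>y. y + c"] by simp
  also have "\<dots> = simple_int \<mu> s + c * \<mu> (s -` range s)"
    by (simp add: simple_int_def distrib_right sum.distrib sum_distrib_left fa_probs_vimage_sum[OF \<mu> s])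
  also have "s -` range s = UNIV" by auto
  finally show ?thesis using fa_probs_UNIV[OF \<mu>] by simp
qed

lemma simple_int_le_add_const:
  assumes \<mu>: "\<mu> \<in> fa_probs" and s: "finite (range s)" and t: "finite (range t)"
    and le: "\<And>x. s x \<le> t x + c"
  shows "simple_int \<mu> s \<le> simple_int \<mu> t + c"
proof -
  have "range (\<lambda>x. t x + c) = (\<lambda>y. y + c) ` range t" by auto
  then have "finite (range (\<lambda>x. t x + c))" using t by simp
  then have "simple_int \<mu> s \<le> simple_int \<mu> (\<lambda>x. t x + c)"
    using simple_int_mono_AE[OF \<mu> s _ fa_probs_UNIV[OF \<mu>]] le by blast
  then show ?thesis using simple_int_add_const[OF \<mu> t] by simp
qed

lemma simple_int_indicator:
  assumes "\<mu> \<in> fa_probs"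
  shows "simple_int \<mu> (\<lambda>x. c * indicator A x) = c * \<mu> A"
proof -
  have "range (indicator A :: 'a \<Rightarrow> real) \<subseteq> {0, 1}" "indicator A -` {1::real} = A"
    by (auto simp: indicator_def)
  then show ?thesis using simple_int_comp[OF assms, of "{0, 1}" "indicator A" "\<lambda>y. c * y"] by simp
qed

section \<open>The integral of bounded functions\<close>

lemma finite_range_imp_bounded_fun: "finite (range s) \<Longrightarrow> bounded_fun (s :: 'a \<Rightarrow> real)"
  unfolding bounded_fun_def by (rule exI[of _ "Max (abs ` range s)"]) auto

lemma dyadic_finite_range:
  assumes "bounded_fun f"
  shows "finite (range (dyadic n f))"
proof -
  obtain C where C: "\<And>x. \<bar>f x\<bar> \<le> C" using assms unfolding bounded_fun_def by auto
  have "\<lfloor>2 ^ n * f x\<rfloor> \<in> {\<lfloor>- (2 ^ n * C)\<rfloor>..\<lfloor>2 ^ n * C\<rfloor>}" for x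
    using mult_left_mono[of "f x" C "2 ^ n"] mult_left_mono[of "- C" "f x" "2 ^ n"] C[of x]
    by (auto intro!: floor_mono simp: abs_le_iff)
  then have "range (dyadic n f) \<subseteq> (\<lambda>k. of_int k / 2 ^ n) ` {\<lfloor>- (2 ^ n * C)\<rfloor>..\<lfloor>2 ^ n * C\<rfloor>}"
    unfolding dyadic_def by auto
  then show ?thesis by (rule finite_subset) simp
qed

lemma dyadic_le: "dyadic n f x \<le> f x"
  unfolding dyadic_def by (simp add: divide_le_eq mult.commute)

lemma less_dyadic_add: "f x < dyadic n f x + 1 / 2 ^ n"
proof -
  have "2 ^ n * f x < of_int \<lfloor>2 ^ n * f x\<rfloor> + 1" by linarith
  then show ?thesis unfolding dyadic_def by (simp add: field_simps)
qed

lemma dyadic_mono: "f x \<le> g y \<Longrightarrow> dyadic n f x \<le> dyadic n g y"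
  unfolding dyadic_def by (simp add: divide_right_mono floor_mono)

text \<open>A dyadic level-\<open>m\<close> point below \<open>f x\<close> is also a level-\<open>n\<close> point below it, for \<open>m \<le> n\<close>.\<close>

lemma dyadic_mono_level:
  assumes "m \<le> n"
  shows "dyadic m f x \<le> dyadic n f x"
proof -
  have pow: "(2::real) ^ n = 2 ^ m * 2 ^ (n - m)" using assms by (simp flip: power_add)
  have "of_int (\<lfloor>2 ^ m * f x\<rfloor> * 2 ^ (n - m)) \<le> 2 ^ n * f x"
    using pow mult_right_mono[OF of_int_floor_le[of "2 ^ m * f x"], of "2 ^ (n - m)"] by simp
  then have "of_int \<lfloor>2 ^ m * f x\<rfloor> * 2 ^ (n - m) \<le> (of_int \<lfloor>2 ^ n * f x\<rfloor> :: real)"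
    by (metis le_floor_iff of_int_le_iff of_int_mult of_int_numeral of_int_power)
  then show ?thesis unfolding dyadic_def using pow by (simp add: field_simps)
qed

lemma simple_int_dyadic_incseq:
  assumes "\<mu> \<in> fa_probs" "bounded_fun f"
  shows "incseq (\<lambda>n. simple_int \<mu> (dyadic n f))"
  using assms by (auto intro!: simple_int_mono_AE[OF _ _ _ fa_probs_UNIV]
      dyadic_finite_range dyadic_mono_level simp: incseq_def)

lemma simple_int_dyadic_le_add:
  assumes \<mu>: "\<mu> \<in> fa_probs" and f: "bounded_fun f"
  shows "simple_int \<mu> (dyadic m f) \<le> simple_int \<mu> (dyadic n f) + 1 / 2 ^ n"
  using dyadic_le[of m f] less_dyadic_add[of f _ n]
  by (intro simple_int_le_add_const[OF \<mu> dyadic_finite_range[OF f] dyadic_finite_range[OF f]])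
    (meson less_imp_le order_trans)

lemma LIMSEQ_simple_int_dyadic:
  assumes \<mu>: "\<mu> \<in> fa_probs" and f: "bounded_fun f"
  shows "(\<lambda>n. simple_int \<mu> (dyadic n f)) \<longlonglongrightarrow> ba_int \<mu> f"
proof -
  have "bdd_above (range (\<lambda>n. simple_int \<mu> (dyadic n f)))"
    using simple_int_dyadic_le_add[OF \<mu> f, of _ 0] by (intro bdd_aboveI2) auto
  from LIMSEQ_incseq_SUP[OF this simple_int_dyadic_incseq[OF \<mu> f]]
  show ?thesis unfolding ba_int_def by (simp add: limI)
qed

lemma simple_int_dyadic_le_ba_int:
  "\<mu> \<in> fa_probs \<Longrightarrow> bounded_fun f \<Longrightarrow> simple_int \<mu> (dyadic n f) \<le> ba_int \<mu> f"
  using incseq_le[OF simple_int_dyadic_incseq LIMSEQ_simple_int_dyadic] by blast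

lemma ba_int_le_simple_int_dyadic:
  assumes "\<mu> \<in> fa_probs" "bounded_fun f"
  shows "ba_int \<mu> f \<le> simple_int \<mu> (dyadic n f) + 1 / 2 ^ n"
  using LIMSEQ_le_const2[OF LIMSEQ_simple_int_dyadic[OF assms]] simple_int_dyadic_le_add[OF assms]
  by blast

lemma ba_int_mono_AE:
  assumes \<mu>: "\<mu> \<in> fa_probs" and f: "bounded_fun f" and g: "bounded_fun g"
    and A: "\<mu> A = 1" and le: "\<And>x. x \<in> A \<Longrightarrow> f x \<le> g x"
  shows "ba_int \<mu> f \<le> ba_int \<mu> g"
  using le
  by (intro LIMSEQ_le[OF LIMSEQ_simple_int_dyadic[OF \<mu> f] LIMSEQ_simple_int_dyadic[OF \<mu> g]]
      exI[of _ 0] allI impI simple_int_mono_AE[OF \<mu> dyadic_finite_range[OF f]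
        dyadic_finite_range[OF g] A] dyadic_mono)

lemma ba_int_simple:
  assumes \<mu>: "\<mu> \<in> fa_probs" and s: "finite (range s)"
  shows "ba_int \<mu> s = simple_int \<mu> s"
proof -
  have f: "bounded_fun s" using finite_range_imp_bounded_fun[OF s] .
  let ?X = "\<lambda>n. simple_int \<mu> (dyadic n s)"
  have up: "?X n \<le> simple_int \<mu> s" for n
    using simple_int_le_add_const[OF \<mu> dyadic_finite_range[OF f] s, where c = 0] by (simp add: dyadic_le)
  have lo: "simple_int \<mu> s - 1 / 2 ^ n \<le> ?X n" for n
  proof -
    have "simple_int \<mu> s \<le> ?X n + 1 / 2 ^ n"
      by (rule simple_int_le_add_const[OF \<mu> s dyadic_finite_range[OF f]])
        (rule less_imp_le[OF less_dyadic_add])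
    then show ?thesis by simp
  qed
  have "(\<lambda>n. simple_int \<mu> s - 1 / 2 ^ n) \<longlonglongrightarrow> simple_int \<mu> s"
    using tendsto_diff[OF tendsto_const LIMSEQ_divide_realpow_zero[of 2 1]] by simp
  then have "?X \<longlonglongrightarrow> simple_int \<mu> s"
    by (rule tendsto_sandwich[rotated 2, OF _ tendsto_const]) (simp_all add: lo up)
  then show ?thesis using LIMSEQ_unique[OF LIMSEQ_simple_int_dyadic[OF \<mu> f]] by simp
qed

lemma ba_int_const: "\<mu> \<in> fa_probs \<Longrightarrow> ba_int \<mu> (\<lambda>_. c) = c"
  using ba_int_simple[of \<mu> "\<lambda>_. c"] simple_int_const[of \<mu> c] by simp

lemma ba_int_indicator:
  assumes "\<mu> \<in> fa_probs"
  shows "ba_int \<mu> (\<lambda>x. c * indicator A x) = c * \<mu> A"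
proof -
  have "range (\<lambda>x. c * indicator A x :: real) \<subseteq> {0, c}" by (auto simp: indicator_def)
  then have "finite (range (\<lambda>x. c * indicator A x :: real))" by (rule finite_subset) simp
  then show ?thesis using ba_int_simple[OF assms] simple_int_indicator[OF assms] by simp
qed

text \<open>Each \<open>\<mu> \<mapsto> simple_int \<mu> (dyadic n f)\<close> is a finite combination of coordinates, and
  these converge uniformly on \<open>fa_probs\<close> at rate \<open>2 ^ - n\<close>.\<close>

lemma ba_int_continuous_on:
  assumes f: "bounded_fun f" and P: "P \<subseteq> fa_probs"
  shows "continuous_on P (\<lambda>\<mu>. ba_int \<mu> f)"
proof (rule uniform_limit_theorem[where F = sequentially and f = "\<lambda>n \<mu>. simple_int \<mu> (dyadic n f)"])
  have coord: "continuous_on P (\<lambda>\<mu>::'a set \<Rightarrow> real. \<mu> B)" for B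
    by (rule continuous_on_subset[OF continuous_on_product_coordinates]) simp
  show "\<forall>\<^sub>F n in sequentially. continuous_on P (\<lambda>\<mu>. simple_int \<mu> (dyadic n f))"
    unfolding simple_int_def
    by (intro always_eventually allI continuous_on_sum continuous_on_mult continuous_on_const coord)
  show "uniform_limit P (\<lambda>n \<mu>. simple_int \<mu> (dyadic n f)) (\<lambda>\<mu>. ba_int \<mu> f) sequentially"
  proof (rule uniform_limitI)
    fix e :: real assume "e > 0"
    then have "\<forall>\<^sub>F n in sequentially. 1 / 2 ^ n < e"
      using LIMSEQ_divide_realpow_zero[of 2 1] by (simp add: order_tendstoD(2))
    then show "\<forall>\<^sub>F n in sequentially. \<forall>\<mu>\<in>P. dist (simple_int \<mu> (dyadic n f)) (ba_int \<mu> f) < e"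
    proof (rule eventually_mono, intro ballI)
      fix n :: nat and \<mu> assume "1 / 2 ^ n < e" "\<mu> \<in> P"
      then show "dist (simple_int \<mu> (dyadic n f)) (ba_int \<mu> f) < e"
        using P simple_int_dyadic_le_ba_int[OF _ f, of \<mu> n] ba_int_le_simple_int_dyadic[OF _ f, of \<mu> n]
        by (auto simp: dist_real_def)
    qed
  qed
qed simp

section \<open>The extended integral\<close>

lemma trunc_fun_bounded: "bounded_fun (trunc_fun n h)"
  unfolding bounded_fun_def trunc_fun_def by (rule exI[of _ "real n"]) auto

lemma gen_int_nonneg_if_trunc_nonneg:
  assumes "\<And>n. ba_int \<mu> (trunc_fun n h) \<ge> 0"
  shows "gen_int \<mu> h \<ge> 0"
proof (cases "\<exists>L. (\<lambda>n. ereal (ba_int \<mu> (trunc_fun n h))) \<longlonglongrightarrow> L")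
  case True
  then obtain L where L: "(\<lambda>n. ereal (ba_int \<mu> (trunc_fun n h))) \<longlonglongrightarrow> L" ..
  have "0 \<le> L" by (rule LIMSEQ_le_const[OF L]) (use assms in auto)
  then show ?thesis unfolding gen_int_def using limI[OF L] True by simp
qed (simp add: gen_int_def)

lemma gen_int_nonneg:
  assumes \<mu>: "\<mu> \<in> fa_probs" and null: "\<And>\<eta>. \<eta> > 0 \<Longrightarrow> \<mu> {x. h x \<le> - \<eta>} = 0"
  shows "gen_int \<mu> h \<ge> 0"
proof (rule gen_int_nonneg_if_trunc_nonneg, rule field_le_epsilon)
  fix n and \<eta> :: real assume "\<eta> > 0"
  have "\<mu> (- {x. h x \<le> - \<eta>}) = 1" using fa_probs_Compl[OF \<mu>] null[OF \<open>\<eta> > 0\<close>] by simp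
  moreover have "- \<eta> \<le> trunc_fun n h x" if "x \<in> - {x. h x \<le> - \<eta>}" for x
    using that \<open>\<eta> > 0\<close> unfolding trunc_fun_def by (auto simp: min_def max_def)
  ultimately have "ba_int \<mu> (\<lambda>_. - \<eta>) \<le> ba_int \<mu> (trunc_fun n h)"
    using bounded_fun_def by (intro ba_int_mono_AE[OF \<mu> _ trunc_fun_bounded]) auto
  then show "0 \<le> ba_int \<mu> (trunc_fun n h) + \<eta>" using ba_int_const[OF \<mu>] by simp
qed

text \<open>Where \<open>k \<le> 0\<close> the truncations \<open>- min (- k) n\<close> decrease in \<open>n\<close>, so the extended
  integral exists and is bounded by the first truncation, which is at most
  \<open>- min \<eta> 1\<close> on \<open>{k \<le> - \<eta>}\<close>.\<close>

lemma gen_int_neg: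
  assumes \<mu>: "\<mu> \<in> fa_probs" and A: "\<mu> A = 1" and nonpos: "\<And>x. x \<in> A \<Longrightarrow> k x \<le> 0"
    and \<eta>: "\<eta> > 0" and pos: "\<mu> {x. k x \<le> - \<eta>} > 0"
  shows "gen_int \<mu> k < 0"
proof -
  let ?X = "\<lambda>n. ereal (ba_int \<mu> (trunc_fun n k))"
  have trunc: "trunc_fun n k x = - min (- k x) (real n)" if "x \<in> A" for n x
    using nonpos[OF that] unfolding trunc_fun_def by (simp add: max_def)
  have "decseq ?X"
    using trunc by (intro decseq_SucI) (auto intro!: ba_int_mono_AE[OF \<mu> trunc_fun_bounded trunc_fun_bounded A])
  then have lim: "?X \<longlonglongrightarrow> (INF n. ?X n)" by (rule LIMSEQ_INF)
  have "gen_int \<mu> k = (INF n. ?X n)" unfolding gen_int_def using lim limI[OF lim] by auto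
  also have "\<dots> \<le> ?X 1" by (rule INF_lower) simp
  also have "ba_int \<mu> (trunc_fun 1 k) \<le> ba_int \<mu> (\<lambda>x. - min \<eta> 1 * indicator {x. k x \<le> - \<eta>} x)"
  proof (rule ba_int_mono_AE[OF \<mu> trunc_fun_bounded _ A])
    show "bounded_fun (\<lambda>x. - min \<eta> 1 * indicator {x. k x \<le> - \<eta>} x)"
      unfolding bounded_fun_def by (rule exI[of _ "\<bar>min \<eta> 1\<bar>"]) (auto simp: indicator_def)
    show "trunc_fun 1 k x \<le> - min \<eta> 1 * indicator {x. k x \<le> - \<eta>} x" if "x \<in> A" for x
      using trunc[OF that] nonpos[OF that] by (auto simp: indicator_def min_def)
  qed
  also have "\<dots> = - min \<eta> 1 * \<mu> {x. k x \<le> - \<eta>}" by (rule ba_int_indicator[OF \<mu>])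
  also have "\<dots> < 0" using pos \<eta> by simp
  finally show ?thesis by (simp add: zero_ereal_def)
qed

section \<open>Ideals of sets and \<open>0\<close>-\<open>1\<close> valued probabilities\<close>

definition set_ideal :: "'a set set \<Rightarrow> bool" where
  "set_ideal N \<longleftrightarrow>
     {} \<in> N \<and> (\<forall>A B. A \<in> N \<longrightarrow> B \<in> N \<longrightarrow> A \<union> B \<in> N) \<and> (\<forall>A B. A \<in> N \<longrightarrow> B \<subseteq> A \<longrightarrow> B \<in> N)"

lemma induced_by_ideal_iff:
  "induced_by_ideal R \<longleftrightarrow>
     (\<exists>N. set_ideal N \<and> UNIV \<notin> N \<and> (\<forall>f g. R f g \<longleftrightarrow> (\<forall>\<eta>>0. {x. f x - g x \<le> - \<eta>} \<in> N)))"
  unfolding induced_by_ideal_def set_ideal_def by (simp only: conj_assoc)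

lemma set_idealI:
  assumes "{} \<in> N" "\<And>A B. A \<in> N \<Longrightarrow> B \<in> N \<Longrightarrow> A \<union> B \<in> N" "\<And>A B. A \<in> N \<Longrightarrow> B \<subseteq> A \<Longrightarrow> B \<in> N"
  shows "set_ideal N"
  using assms unfolding set_ideal_def by blast

lemma set_idealD:
  assumes "set_ideal N"
  shows set_ideal_empty: "{} \<in> N"
    and set_ideal_Un: "A \<in> N \<Longrightarrow> B \<in> N \<Longrightarrow> A \<union> B \<in> N"
    and set_ideal_subset: "A \<in> N \<Longrightarrow> B \<subseteq> A \<Longrightarrow> B \<in> N"
  using assms unfolding set_ideal_def by blast+

lemma set_ideal_Union_chain:
  assumes "\<C> \<noteq> {}" and ideal: "\<And>J. J \<in> \<C> \<Longrightarrow> set_ideal J"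
    and chain: "\<And>J K. J \<in> \<C> \<Longrightarrow> K \<in> \<C> \<Longrightarrow> J \<subseteq> K \<or> K \<subseteq> J"
  shows "set_ideal (\<Union>\<C>)"
proof (rule set_idealI)
  show "{} \<in> \<Union>\<C>" using assms(1) ideal set_ideal_empty by blast
next
  fix A B assume "A \<in> \<Union>\<C>" "B \<in> \<Union>\<C>"
  then obtain J K where JK: "J \<in> \<C>" "K \<in> \<C>" "A \<in> J" "B \<in> K" by blast
  then show "A \<union> B \<in> \<Union>\<C>"
    using chain[OF JK(1,2)] set_ideal_Un[OF ideal[OF JK(1)]] set_ideal_Un[OF ideal[OF JK(2)]] by blast
next
  fix A B assume "A \<in> \<Union>\<C>" "B \<subseteq> A"
  then show "B \<in> \<Union>\<C>" using ideal set_ideal_subset by blast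
qed

lemma set_ideal_adjoin:
  assumes M: "set_ideal M"
  shows "set_ideal {C. \<exists>D\<in>M. C \<subseteq> D \<union> X}"
proof (rule set_idealI)
  show "{} \<in> {C. \<exists>D\<in>M. C \<subseteq> D \<union> X}" using set_ideal_empty[OF M] by blast
next
  fix A B assume "A \<in> {C. \<exists>D\<in>M. C \<subseteq> D \<union> X}" "B \<in> {C. \<exists>D\<in>M. C \<subseteq> D \<union> X}"
  then obtain D E where "D \<in> M" "E \<in> M" "A \<subseteq> D \<union> X" "B \<subseteq> E \<union> X" by blast
  then show "A \<union> B \<in> {C. \<exists>D\<in>M. C \<subseteq> D \<union> X}"
    using set_ideal_Un[OF M, of D E] by (intro CollectI bexI[of _ "D \<union> E"]) auto
qed blast

text \<open>Zorn's lemma: an ideal avoiding \<open>A\<close> extends to a maximal such ideal, and maximality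
  forces it to contain \<open>B\<close> or \<open>- B\<close>: otherwise adjoining either one would capture \<open>A\<close>,
  so \<open>A\<close> would be covered by the union of two members.\<close>

lemma set_ideal_prime_extension:
  assumes N: "set_ideal N" and A: "A \<notin> N"
  obtains M where "set_ideal M" "N \<subseteq> M" "A \<notin> M" "\<And>B. B \<in> M \<or> - B \<in> M"
proof -
  define \<A> where "\<A> = {J. set_ideal J \<and> N \<subseteq> J \<and> A \<notin> J}"
  have "\<exists>M\<in>\<A>. \<forall>J\<in>\<A>. M \<subseteq> J \<longrightarrow> J = M"
  proof (rule subset_Zorn_nonempty)
    show "\<A> \<noteq> {}" using N A unfolding \<A>_def by blast
  next
    fix \<C> assume "\<C> \<noteq> {}" "subset.chain \<A> \<C>"
    then have "\<C> \<subseteq> \<A>" and chain: "\<And>J K. J \<in> \<C> \<Longrightarrow> K \<in> \<C> \<Longrightarrow> J \<subseteq> K \<or> K \<subseteq> J"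
      unfolding subset.chain_def by auto
    have "set_ideal (\<Union>\<C>)"
      by (rule set_ideal_Union_chain[OF \<open>\<C> \<noteq> {}\<close> _ chain]) (use \<open>\<C> \<subseteq> \<A>\<close> in \<open>auto simp: \<A>_def\<close>)
    moreover have "N \<subseteq> \<Union>\<C>" "A \<notin> \<Union>\<C>"
      using \<open>\<C> \<noteq> {}\<close> \<open>\<C> \<subseteq> \<A>\<close> unfolding \<A>_def by auto
    ultimately show "\<Union>\<C> \<in> \<A>" unfolding \<A>_def by blast
  qed
  then obtain M where "M \<in> \<A>" and max: "\<And>J. J \<in> \<A> \<Longrightarrow> M \<subseteq> J \<Longrightarrow> J = M"
    by blast
  then have M: "set_ideal M" "N \<subseteq> M" "A \<notin> M" unfolding \<A>_def by auto
  have captures: "\<exists>D\<in>M. A \<subseteq> D \<union> X" if "X \<notin> M" for X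
  proof (rule ccontr)
    let ?J = "{C. \<exists>D\<in>M. C \<subseteq> D \<union> X}"
    assume "\<not> ?thesis"
    then have "?J \<in> \<A>" using M set_ideal_adjoin[OF M(1)] unfolding \<A>_def by blast
    then have "?J = M" by (rule max) blast
    moreover have "X \<in> ?J" using set_ideal_empty[OF M(1)] by blast
    ultimately have "X \<in> M" by (simp only:)
    with that show False by contradiction
  qed
  have prime: "B \<in> M \<or> - B \<in> M" for B
  proof (rule ccontr)
    assume "\<not> ?thesis"
    then obtain D E where "D \<in> M" "E \<in> M" "A \<subseteq> D \<union> B" "A \<subseteq> E \<union> - B"
      using captures by meson
    then have "A \<subseteq> D \<union> E" "D \<union> E \<in> M" using set_ideal_Un[OF M(1)] by blast+
    then show False using set_ideal_subset[OF M(1)] M(3) by blast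
  qed
  show ?thesis by (rule that[OF M prime])
qed

definition zero_one_probs :: "'a set set \<Rightarrow> ('a set \<Rightarrow> real) set" where
  "zero_one_probs N = {\<mu> \<in> fa_probs. (\<forall>B. \<mu> B \<in> {0, 1}) \<and> (\<forall>B\<in>N. \<mu> B = 0)}"

lemma zero_one_probs_fa_probs: "zero_one_probs N \<subseteq> fa_probs"
  unfolding zero_one_probs_def by blast

lemma zero_one_probs_exists:
  assumes "set_ideal N" "A \<notin> N"
  obtains \<mu> where "\<mu> \<in> zero_one_probs N" "\<mu> A = 1"
proof -
  obtain M where M: "set_ideal M" "N \<subseteq> M" "A \<notin> M" and prime: "\<And>B. B \<in> M \<or> - B \<in> M"
    using set_ideal_prime_extension[OF assms] by blast
  define \<mu> :: "'a set \<Rightarrow> real" where "\<mu> B = (if B \<in> M then 0 else 1)" for B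
  note down = set_ideal_subset[OF M(1)] and up = set_ideal_Un[OF M(1)]
  have "\<mu> (B \<union> C) = \<mu> B + \<mu> C" if "B \<inter> C = {}" for B C
  proof -
    have "B \<in> M \<or> C \<in> M"
      using prime[of B] down[of "- B" C] that by blast
    then show ?thesis
      using up[of B C] down[of "B \<union> C" B] down[of "B \<union> C" C] unfolding \<mu>_def by auto
  qed
  moreover have "UNIV \<notin> M" using down M(3) by blast
  ultimately have "\<mu> \<in> fa_probs" unfolding fa_probs_def ba_def
    by (auto simp: \<mu>_def intro!: exI[of _ 1])
  moreover have "\<forall>B. \<mu> B \<in> {0, 1}" "\<forall>B\<in>N. \<mu> B = 0" "\<mu> A = 1"
    using M(2,3) by (auto simp: \<mu>_def)
  ultimately show ?thesis using that unfolding zero_one_probs_def by blast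
qed

section \<open>Weak* compactness\<close>

lemma continuous_map_weak_star:
  assumes P: "P \<subseteq> fa_probs"
  shows "continuous_map (top_of_set P) weak_star id"
  unfolding weak_star_def
proof (rule continuous_on_generated_topo)
  fix W :: "('a set \<Rightarrow> real) set"
  assume "W \<in> {{m \<in> ba. ba_int m f \<in> U} | f U. bounded_fun f \<and> open U}"
  then obtain f U where W: "W = {m \<in> ba. ba_int m f \<in> U}" and f: "bounded_fun f" and "open U"
    by blast
  then have "openin (top_of_set P) (P \<inter> (\<lambda>\<mu>. ba_int \<mu> f) -` U)"
    by (intro continuous_openin_preimage_gen ba_int_continuous_on[OF f P])
  moreover have "id -` W \<inter> topspace (top_of_set P) = P \<inter> (\<lambda>\<mu>. ba_int \<mu> f) -` U"
    using P unfolding W fa_probs_def by auto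
  ultimately show "openin (top_of_set P) (id -` W \<inter> topspace (top_of_set P))" by simp
next
  have "bounded_fun (\<lambda>_::'a. 0 :: real)" unfolding bounded_fun_def by blast
  then have "{m \<in> ba. ba_int m (\<lambda>_::'a. 0) \<in> UNIV} \<in> {{m \<in> ba. ba_int m f \<in> U} | f U. bounded_fun f \<and> open U}"
    by blast
  then show "id ` topspace (top_of_set P) \<subseteq> \<Union> {{m \<in> ba. ba_int m f \<in> U} | f U. bounded_fun f \<and> open U}"
    using P unfolding fa_probs_def by auto
qed

lemma compactin_weak_star:
  assumes "P \<subseteq> fa_probs" "compact P"
  shows "compactin weak_star P"
  using image_compactin[of "top_of_set P" P weak_star id] continuous_map_weak_star[OF assms(1)] assms(2)
  by (simp add: compactin_subtopology)

lemma zero_one_probs_eq: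
  "zero_one_probs N = {\<mu>. (\<forall>A B. A \<inter> B = {} \<longrightarrow> \<mu> (A \<union> B) = \<mu> A + \<mu> B) \<and>
     (\<forall>B. \<mu> B \<in> {0, 1}) \<and> \<mu> UNIV = 1 \<and> (\<forall>B. B \<in> N \<longrightarrow> \<mu> B = 0)}" (is "_ = ?Q")
proof
  show "zero_one_probs N \<subseteq> ?Q" unfolding zero_one_probs_def fa_probs_def ba_def by auto
  show "?Q \<subseteq> zero_one_probs N"
  proof
    fix \<mu> assume "\<mu> \<in> ?Q"
    then have "\<forall>B. \<mu> B \<in> {0, 1}" by blast
    then have "\<forall>A. \<bar>\<mu> A\<bar> \<le> 1" "\<forall>A. \<mu> A \<ge> 0"
      by (metis abs_zero abs_one insertE order_refl singletonD zero_le_one)+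
    with \<open>\<mu> \<in> ?Q\<close> show "\<mu> \<in> zero_one_probs N" unfolding zero_one_probs_def fa_probs_def ba_def by blast
  qed
qed

text \<open>In the product topology on \<open>'a set \<Rightarrow> real\<close>, the \<open>0\<close>-\<open>1\<close> valued finitely additive
  probabilities vanishing on \<open>N\<close> form a closed subset of the compact cube \<open>[0, 1] ^ UNIV\<close>.\<close>

lemma compact_zero_one_probs: "compact (zero_one_probs N)"
proof -
  have coord: "continuous_on UNIV (\<lambda>\<mu>::'a set \<Rightarrow> real. \<mu> B)" for B
    by simp
  have additive: "closed {\<mu>::'a set \<Rightarrow> real. A \<inter> B = {} \<longrightarrow> \<mu> (A \<union> B) = \<mu> A + \<mu> B}" for A B
  proof (cases "A \<inter> B = {}")
    case True
    have "closed {\<mu>::'a set \<Rightarrow> real. \<mu> (A \<union> B) = \<mu> A + \<mu> B}"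
      by (rule closed_Collect_eq[OF coord continuous_on_add[OF coord coord]])
    then show ?thesis using True by simp
  qed simp
  have zero_one: "closed {\<mu>::'a set \<Rightarrow> real. \<mu> B \<in> {0, 1}}" for B
  proof -
    have "closed ((\<lambda>\<mu>::'a set \<Rightarrow> real. \<mu> B) -` {0, 1})"
      by (rule closed_vimage) (simp_all add: finite_imp_closed)
    then show ?thesis by (simp add: vimage_def)
  qed
  have level: "closed {\<mu>::'a set \<Rightarrow> real. \<mu> B = c}" for B c
    by (rule closed_Collect_eq[OF coord continuous_on_const])
  have null: "closed {\<mu>::'a set \<Rightarrow> real. B \<in> N \<longrightarrow> \<mu> B = 0}" for B
    using level[of B 0] by (cases "B \<in> N") simp_all
  have "closed (zero_one_probs N)"
    unfolding zero_one_probs_eq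
    by (intro closed_Collect_conj closed_Collect_all additive zero_one level null)
  moreover have "compact (PiE UNIV (\<lambda>_::'a set. {0..1::real}))"
    using compactin_PiE[of "\<lambda>_. euclideanreal" UNIV "\<lambda>_. {0..1::real}"]
    by (simp add: euclidean_product_topology)
  moreover have "zero_one_probs N \<subseteq> PiE UNIV (\<lambda>_::'a set. {0..1::real})"
  proof
    fix \<mu> assume "\<mu> \<in> zero_one_probs N"
    then have "\<mu> \<in> fa_probs" using zero_one_probs_fa_probs by blast
    then show "\<mu> \<in> PiE UNIV (\<lambda>_. {0..1})" by (simp add: PiE_UNIV_domain fa_probs_nonneg fa_probs_le_1)
  qed
  ultimately show ?thesis
    using compact_Int_closed[of "PiE UNIV (\<lambda>_::'a set. {0..1::real})" "zero_one_probs N"]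
    by (simp add: Int_absorb1)
qed

section \<open>The characterisation\<close>

lemma SUP_zero_one_probs:
  assumes "set_ideal N" "UNIV \<notin> N"
  shows "(SUP \<mu>\<in>zero_one_probs N. ereal (\<mu> A)) = (if A \<in> N then 0 else 1)"
proof (cases "A \<in> N")
  case True
  obtain \<nu> where "\<nu> \<in> zero_one_probs N" using zero_one_probs_exists[OF assms] by blast
  have "(SUP \<mu>\<in>zero_one_probs N. ereal (\<mu> A)) = (SUP \<mu>\<in>zero_one_probs N. 0)"
    using True by (intro SUP_cong) (auto simp: zero_one_probs_def)
  also have "\<dots> = 0" using \<open>\<nu> \<in> zero_one_probs N\<close> by (intro SUP_const) blast
  finally show ?thesis using True by simp
next
  case False
  obtain \<nu> where \<nu>: "\<nu> \<in> zero_one_probs N" "\<nu> A = 1" using zero_one_probs_exists[OF assms(1) False] by blast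
  have "(SUP \<mu>\<in>zero_one_probs N. ereal (\<mu> A)) = 1"
  proof (rule antisym)
    show "(SUP \<mu>\<in>zero_one_probs N. ereal (\<mu> A)) \<le> 1"
      using fa_probs_le_1 zero_one_probs_fa_probs by (intro SUP_least) auto
    show "1 \<le> (SUP \<mu>\<in>zero_one_probs N. ereal (\<mu> A))"
      using SUP_upper[OF \<nu>(1), of "\<lambda>\<mu>. ereal (\<mu> A)"] \<nu>(2) by (simp add: one_ereal_def)
  qed
  then show ?thesis using False by simp
qed

lemma INF_gen_int_zero_one_probs_nonneg_iff:
  assumes N: "set_ideal N"
  shows "(INF \<mu>\<in>zero_one_probs N. gen_int \<mu> h) \<ge> 0 \<longleftrightarrow> (\<forall>\<eta>>0. {x. h x \<le> - \<eta>} \<in> N)"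
proof
  assume inf: "(INF \<mu>\<in>zero_one_probs N. gen_int \<mu> h) \<ge> 0"
  show "\<forall>\<eta>>0. {x. h x \<le> - \<eta>} \<in> N"
  proof (intro allI impI, rule ccontr)
    fix \<eta> :: real assume \<eta>: "\<eta> > 0" and "{x. h x \<le> - \<eta>} \<notin> N"
    then obtain \<mu> where \<mu>: "\<mu> \<in> zero_one_probs N" "\<mu> {x. h x \<le> - \<eta>} = 1"
      using zero_one_probs_exists[OF N] by blast
    then have "gen_int \<mu> h < 0"
      using gen_int_neg[of \<mu> "{x. h x \<le> - \<eta>}" h \<eta>] \<eta> zero_one_probs_fa_probs by auto
    moreover have "gen_int \<mu> h \<ge> 0" using inf INF_lower[OF \<mu>(1)] by (rule order_trans)
    ultimately show False by simp
  qed
next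
  assume "\<forall>\<eta>>0. {x. h x \<le> - \<eta>} \<in> N"
  then show "(INF \<mu>\<in>zero_one_probs N. gen_int \<mu> h) \<ge> 0"
    by (intro INF_greatest gen_int_nonneg) (auto simp: zero_one_probs_def)
qed

definition common_null_sets :: "('a set \<Rightarrow> real) set \<Rightarrow> 'a set set" where
  "common_null_sets P = {A. \<forall>\<mu>\<in>P. \<mu> A = 0}"

lemma set_ideal_common_null_sets:
  assumes P: "P \<subseteq> fa_probs"
  shows "set_ideal (common_null_sets P)"
proof (rule set_idealI)
  show "{} \<in> common_null_sets P" using P fa_probs_empty by (auto simp: common_null_sets_def)
next
  fix A B assume AB: "A \<in> common_null_sets P" "B \<in> common_null_sets P"
  show "A \<union> B \<in> common_null_sets P" unfolding common_null_sets_def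
  proof (intro CollectI ballI)
    fix \<mu> assume "\<mu> \<in> P"
    then have "\<mu> \<in> fa_probs" "\<mu> A = 0" "\<mu> B = 0" using P AB unfolding common_null_sets_def by auto
    then show "\<mu> (A \<union> B) = 0" using fa_probs_subadditive[of \<mu> A B] fa_probs_nonneg[of \<mu> "A \<union> B"] by linarith
  qed
next
  fix A B assume A: "A \<in> common_null_sets P" and "B \<subseteq> A"
  show "B \<in> common_null_sets P" unfolding common_null_sets_def
  proof (intro CollectI ballI)
    fix \<mu> assume "\<mu> \<in> P"
    then have "\<mu> \<in> fa_probs" "\<mu> A = 0" using P A unfolding common_null_sets_def by auto
    then show "\<mu> B = 0" using fa_probs_mono[of \<mu> B A] fa_probs_nonneg[of \<mu> B] \<open>B \<subseteq> A\<close> by linarith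
  qed
qed

lemma UNIV_notin_common_null_sets:
  "P \<subseteq> fa_probs \<Longrightarrow> P \<noteq> {} \<Longrightarrow> UNIV \<notin> common_null_sets P"
  using fa_probs_UNIV unfolding common_null_sets_def by fastforce

lemma regular_stochastic_orderD:
  assumes "regular_stochastic_order R"
  shows regular_stochastic_order_refl: "R f f"
    and regular_stochastic_order_cone: "R f1 g1 \<Longrightarrow> R f2 g2 \<Longrightarrow> a1 \<ge> 0 \<Longrightarrow> a2 \<ge> 0 \<Longrightarrow>
      R (\<lambda>x. a1 * f1 x + a2 * f2 x) (\<lambda>x. a1 * g1 x + a2 * g2 x)"
    and regular_stochastic_order_restrict: "R h (\<lambda>_. 0) \<Longrightarrow> R (\<lambda>x. h x * indicator A x) (\<lambda>_. 0)"
  using assms unfolding regular_stochastic_order_def by blast+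

lemma regular_stochastic_order_restrict_diff:
  assumes reg: "regular_stochastic_order R" and fg: "R f g"
  shows "R (\<lambda>x. (f x - g x) * indicator A x) (\<lambda>_. 0)"
proof -
  have "R (\<lambda>x. 1 * f x + 1 * - g x) (\<lambda>x. 1 * g x + 1 * - g x)"
    using regular_stochastic_order_cone[OF reg, OF fg, of "\<lambda>x. - g x" "\<lambda>x. - g x" 1 1]
      regular_stochastic_order_refl[OF reg, of "\<lambda>x. - g x"] by simp
  then have "R (\<lambda>x. f x - g x) (\<lambda>_. 0)" by simp
  then show ?thesis by (rule regular_stochastic_order_restrict[OF reg])
qed

lemma represented_order_induced_by_common_null_sets:
  assumes reg: "regular_stochastic_order R" and P: "P \<subseteq> fa_probs"
    and repr: "\<And>f g. R f g \<longleftrightarrow> (INF \<mu>\<in>P. gen_int \<mu> (\<lambda>x. f x - g x)) \<ge> 0"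
  shows "R f g \<longleftrightarrow> (\<forall>\<eta>>0. {x. f x - g x \<le> - \<eta>} \<in> common_null_sets P)"
proof
  assume fg: "R f g"
  show "\<forall>\<eta>>0. {x. f x - g x \<le> - \<eta>} \<in> common_null_sets P"
  proof (intro allI impI)
    fix \<eta> :: real assume \<eta>: "\<eta> > 0"
    let ?A = "{x. f x - g x \<le> - \<eta>}"
    let ?k = "\<lambda>x. (f x - g x) * indicator ?A x"
    have "R ?k (\<lambda>_. 0)" by (rule regular_stochastic_order_restrict_diff[OF reg, OF fg])
    then have INF_nonneg: "(INF \<mu>\<in>P. gen_int \<mu> ?k) \<ge> 0" using repr[of ?k "\<lambda>_. 0"] by simp
    have "\<mu> ?A = 0" if "\<mu> \<in> P" for \<mu>
    proof (rule ccontr)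
      assume "\<mu> ?A \<noteq> 0"
      have \<mu>: "\<mu> \<in> fa_probs" using that P by blast
      have "{x. ?k x \<le> - \<eta>} = ?A" using \<eta> by (auto simp: indicator_def)
      then have "\<mu> {x. ?k x \<le> - \<eta>} > 0"
        using \<open>\<mu> ?A \<noteq> 0\<close> fa_probs_nonneg[OF \<mu>, of ?A] by simp
      moreover have "?k x \<le> 0" for x using \<eta> by (simp add: indicator_def)
      ultimately have "gen_int \<mu> ?k < 0"
        using gen_int_neg[OF \<mu> fa_probs_UNIV[OF \<mu>], of ?k \<eta>] \<eta> by blast
      moreover have "gen_int \<mu> ?k \<ge> 0" using INF_nonneg INF_lower[OF that] by (rule order_trans)
      ultimately show False by simp
    qed
    then show "?A \<in> common_null_sets P" unfolding common_null_sets_def by blast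
  qed
next
  assume "\<forall>\<eta>>0. {x. f x - g x \<le> - \<eta>} \<in> common_null_sets P"
  then have "(INF \<mu>\<in>P. gen_int \<mu> (\<lambda>x. f x - g x)) \<ge> 0"
    using P by (intro INF_greatest gen_int_nonneg) (auto simp: common_null_sets_def)
  then show "R f g" using repr[of f g] by blast
qed

lemma induced_by_ideal_imp_representation:
  assumes "induced_by_ideal R"
  shows "\<exists>P \<subseteq> fa_probs. compactin weak_star P \<and> (\<forall>A. (SUP \<mu>\<in>P. ereal (\<mu> A)) \<in> {0, 1}) \<and>
    (\<forall>f g. R f g \<longleftrightarrow> (INF \<mu>\<in>P. gen_int \<mu> (\<lambda>x. f x - g x)) \<ge> 0)"
proof -
  obtain N where N: "set_ideal N" "UNIV \<notin> N"
    and induced: "\<And>f g. R f g \<longleftrightarrow> (\<forall>\<eta>>0. {x. f x - g x \<le> - \<eta>} \<in> N)"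
    using assms unfolding induced_by_ideal_iff by blast
  show ?thesis
  proof (intro exI conjI allI)
    show "zero_one_probs N \<subseteq> fa_probs" by (rule zero_one_probs_fa_probs)
    show "compactin weak_star (zero_one_probs N)"
      by (rule compactin_weak_star[OF zero_one_probs_fa_probs compact_zero_one_probs])
    fix A show "(SUP \<mu>\<in>zero_one_probs N. ereal (\<mu> A)) \<in> {0, 1}"
      by (simp add: SUP_zero_one_probs[OF N])
    fix f g show "R f g \<longleftrightarrow> (INF \<mu>\<in>zero_one_probs N. gen_int \<mu> (\<lambda>x. f x - g x)) \<ge> 0"
      by (simp only: induced INF_gen_int_zero_one_probs_nonneg_iff[OF N(1)])
  qed
qed

theorem lemma2:
  fixes R :: "('a \<Rightarrow> real) \<Rightarrow> ('a \<Rightarrow> real) \<Rightarrow> bool"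
  assumes "regular_stochastic_order R"
  shows "induced_by_ideal R \<longleftrightarrow>
    (\<exists>P \<subseteq> fa_probs. compactin weak_star P \<and>
       (\<forall>A. (SUP \<mu>\<in>P. ereal (\<mu> A)) \<in> {0, 1}) \<and>
       (\<forall>f g. R f g \<longleftrightarrow> (INF \<mu>\<in>P. gen_int \<mu> (\<lambda>x. f x - g x)) \<ge> 0))"
proof
  assume "induced_by_ideal R"
  then show "\<exists>P \<subseteq> fa_probs. compactin weak_star P \<and> (\<forall>A. (SUP \<mu>\<in>P. ereal (\<mu> A)) \<in> {0, 1}) \<and>
    (\<forall>f g. R f g \<longleftrightarrow> (INF \<mu>\<in>P. gen_int \<mu> (\<lambda>x. f x - g x)) \<ge> 0)"
    by (rule induced_by_ideal_imp_representation)
next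
  assume "\<exists>P \<subseteq> fa_probs. compactin weak_star P \<and> (\<forall>A. (SUP \<mu>\<in>P. ereal (\<mu> A)) \<in> {0, 1}) \<and>
    (\<forall>f g. R f g \<longleftrightarrow> (INF \<mu>\<in>P. gen_int \<mu> (\<lambda>x. f x - g x)) \<ge> 0)"
  then obtain P where P: "P \<subseteq> fa_probs" and SUP_01: "(SUP \<mu>\<in>P. ereal (\<mu> UNIV)) \<in> {0, 1}"
    and repr: "\<And>f g. R f g \<longleftrightarrow> (INF \<mu>\<in>P. gen_int \<mu> (\<lambda>x. f x - g x)) \<ge> 0"
    by blast
  have "P \<noteq> {}" using SUP_01 by (auto simp: bot_ereal_def)
  then show "induced_by_ideal R"
    unfolding induced_by_ideal_iff
    by (intro exI[of _ "common_null_sets P"] conjI allI set_ideal_common_null_sets[OF P]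
        UNIV_notin_common_null_sets[OF P] represented_order_induced_by_common_null_sets[OF assms P repr])
qed

end
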